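(* Let $\mathcal{P}=\{1,\dots,p\}$ and let $M(1),\dots,M(p)\in\mathbb{R}^{n\times n}$ be exponentially stable (Hurwitz) matrices. Let $\tau_D>0$ and $\lambda>0$. Then there exists $g_0>0$ such that for every $g\ge g_0$ there is a constant $c>0$ such that, for every switching signal $\sigma\in\mathcal{S}(\tau_D)$ and every initial condition, the solution of $\dot x=gM(\sigma(t))x$ satisfies $\|x(t)\|\le c\,e^{-\lambda t}\|x(0)\|$ for all $t\ge0$.
   Context: A switching signal is a piecewise-constant, right-continuous map $\sigma:[0,\infty)\to\mathcal{P}$ with finitely many discontinuities on each bounded interval; $\mathcal{S}(\tau_D)$ is the set of switching signals whose consecutive discontinuity times $t_1<t_2<\cdots$ (with $t_0=0$) satisfy $t_{k+1}-t_k\ge\tau_D$ for all $k\ge0$. $\|\cdot\|$ is any vector norm (with induced matrix norm). *)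

theory Defs
  imports "HOL-Analysis.Analysis"
begin

definition hurwitz :: "real^'n^'n \<Rightarrow> bool" where
  "hurwitz M \<longleftrightarrow>
     (\<forall>z::complex. det (mat z - (\<chi> i j. complex_of_real (M $ i $ j))) = 0 \<longrightarrow> Re z < 0)"

definition switch_times :: "(real \<Rightarrow> nat) \<Rightarrow> real set" where
  "switch_times \<sigma> = {t. t > 0 \<and> \<not> continuous (at t within {0..}) \<sigma>}"

definition dwell_signal :: "nat \<Rightarrow> real \<Rightarrow> (real \<Rightarrow> nat) \<Rightarrow> bool" where
  "dwell_signal p tauD \<sigma> \<longleftrightarrow>
     (\<forall>t\<ge>0. \<sigma> t \<in> {1..p}) \<and>
     (\<forall>t\<ge>0. continuous (at_right t) \<sigma>) \<and>
     (\<forall>T. finite (switch_times \<sigma> \<inter> {0..T})) \<and>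
     (\<forall>s\<in>insert 0 (switch_times \<sigma>). \<forall>t\<in>insert 0 (switch_times \<sigma>).
         s \<noteq> t \<longrightarrow> tauD \<le> \<bar>s - t\<bar>)"

end

(* For a Hurwitz matrix M there are a > 1 and b > 0 with every eigenvalue of a I + b M in the
   open unit disc, so the powers of a I + b M are bounded and the Euler map F y = y + (b/a) M y
   satisfies |F^N y| <= |y|/2 for some N. The form V y = sum_{k<N} |F^k y|^2 then satisfies
   |y|^2 <= V y <= L |y|^2 and V (F y) <= V y - 3/4 |y|^2, which makes it a strict Lyapunov
   function for x' = M x: solutions of x' = g M x obey |x t| <= sqrt L e^(-g beta (t - s)) |x s|,
   with constants uniform over the finitely many modes. Once g beta >= lam + ln (sqrt L) / tauD,
   the overshoot sqrt L is absorbed within every dwell interval, so the state decays like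
   e^(-lam t) at switching times and exceeds that by at most the factor sqrt L in between. *)

theory Submission
  imports Defs "Jordan_Normal_Form.Spectral_Radius"
begin

hide_const (open) Matrix.vec Matrix.mat Determinant.det

section \<open>Cartesian matrices and the Jordan normal form library\<close>

lemma mat_vector_mult: "mat z *v w = z *s w"
  by (simp add: Finite_Cartesian_Product.vec_eq_iff matrix_vector_mult_def
      Finite_Cartesian_Product.mat_def if_distrib[of "\<lambda>a. a * _"] cong: if_cong)

lemma det_mat_minus_eq_0_iff:
  fixes A :: "'a::field^'n^'n"
  shows "det (mat z - A) = 0 \<longleftrightarrow> (\<exists>w. w \<noteq> 0 \<and> A *v w = z *s w)"
proof -
  have "det (mat z - A) \<noteq> 0 \<longleftrightarrow> inj ((*v) (mat z - A))"
    using det_nz_iff_inj_gen[OF matrix_vector_mul_linear_gen] by (simp add: matrix_of_matrix_vector_mul)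
  also have "\<dots> \<longleftrightarrow> (\<forall>w. (mat z - A) *v w = 0 \<longrightarrow> w = 0)"
    by (rule vec.linear_inj_iff_eq_0[OF matrix_vector_mul_linear_gen])
  finally show ?thesis
    by (auto simp: matrix_vector_mult_diff_rdistrib mat_vector_mult)
qed

(* Any enumeration of the index type identifies real^'n^'n with square matrices of the Jordan
   normal form library, whose spectral radius theory yields bounded powers. *)
definition cart_enum :: "nat \<Rightarrow> 'n::finite" where
  "cart_enum = (SOME e. bij_betw e {0..<CARD('n)} UNIV)"

definition cart_index :: "'n::finite \<Rightarrow> nat" where
  "cart_index = inv_into {0..<CARD('n)} cart_enum"

lemma bij_cart_enum: "bij_betw (cart_enum :: nat \<Rightarrow> 'n::finite) {0..<CARD('n)} UNIV"
proof -
  have "\<exists>e::nat \<Rightarrow> 'n. bij_betw e {0..<CARD('n)} UNIV"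
    using ex_bij_betw_nat_finite[of "UNIV :: 'n set"] by (auto simp: atLeast0LessThan)
  then show ?thesis unfolding cart_enum_def by (rule someI_ex)
qed

lemma cart_index_less: "cart_index (i :: 'n::finite) < CARD('n)"
  using bij_betw_inv_into[OF bij_cart_enum] unfolding cart_index_def bij_betw_def by auto

lemma cart_enum_index [simp]: "cart_enum (cart_index i) = i"
  unfolding cart_index_def by (rule bij_betw_inv_into_right[OF bij_cart_enum]) simp

lemma cart_index_enum [simp]: "k < CARD('n) \<Longrightarrow> cart_index (cart_enum k :: 'n::finite) = k"
  unfolding cart_index_def by (rule bij_betw_inv_into_left[OF bij_cart_enum]) simp

lemma sum_UNIV_cart_enum: "(\<Sum>i\<in>UNIV. f i) = (\<Sum>k<CARD('n). f (cart_enum k :: 'n::finite))"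
  using sum.reindex_bij_betw[OF bij_cart_enum, of f] by (simp add: atLeast0LessThan)

definition vec_of_cart :: "'a^'n::finite \<Rightarrow> 'a Matrix.vec" where
  "vec_of_cart v = Matrix.vec CARD('n) (\<lambda>k. v $ cart_enum k)"

definition cart_of_vec :: "'a Matrix.vec \<Rightarrow> 'a^'n::finite" where
  "cart_of_vec v = (\<chi> i. vec_index v (cart_index i))"

definition mat_of_cart :: "'a^'n^'n::finite \<Rightarrow> 'a Matrix.mat" where
  "mat_of_cart A = Matrix.mat CARD('n) CARD('n) (\<lambda>(k, l). A $ cart_enum k $ cart_enum l)"

lemma vec_of_cart_carrier [simp]: "vec_of_cart (v :: 'a^'n::finite) \<in> carrier_vec CARD('n)"
  unfolding vec_of_cart_def by simp

lemma mat_of_cart_carrier [simp]: "mat_of_cart (A :: 'a^'n^'n::finite) \<in> carrier_mat CARD('n) CARD('n)"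
  unfolding mat_of_cart_def by simp

lemma vec_index_vec_of_cart: "vec_index (vec_of_cart v) (cart_index i) = v $ i"
  unfolding vec_of_cart_def using cart_index_less[of i] by simp

lemma cart_of_vec_inverse [simp]: "cart_of_vec (vec_of_cart v) = v"
  by (simp add: cart_of_vec_def vec_index_vec_of_cart)

lemma vec_of_cart_inverse:
  "v \<in> carrier_vec CARD('n) \<Longrightarrow> vec_of_cart (cart_of_vec v :: 'a^'n::finite) = v"
  by (intro eq_vecI) (auto simp: vec_of_cart_def cart_of_vec_def)

lemma vec_of_cart_zero [simp]: "vec_of_cart (0 :: 'a::zero^'n::finite) = 0\<^sub>v CARD('n)"
  by (intro eq_vecI) (auto simp: vec_of_cart_def)

lemma vec_of_cart_eq_iff [simp]: "vec_of_cart v = vec_of_cart w \<longleftrightarrow> v = w"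
  by (metis cart_of_vec_inverse)

lemma vec_of_cart_smult: "vec_of_cart (z *s w) = z \<cdot>\<^sub>v vec_of_cart w"
  by (intro eq_vecI) (auto simp: vec_of_cart_def)

lemma mat_of_cart_mult_vec:
  fixes A :: "'a::comm_semiring_1^'n^'n::finite"
  shows "mat_of_cart A *\<^sub>v vec_of_cart v = vec_of_cart (A *v v)"
  by (intro eq_vecI)
    (auto simp: mat_of_cart_def vec_of_cart_def scalar_prod_def matrix_vector_mult_def
      sum_UNIV_cart_enum atLeast0LessThan)

lemma mat_of_cart_pow_mult_vec:
  fixes A :: "'a::comm_semiring_1^'n^'n::finite"
  shows "(mat_of_cart A ^\<^sub>m k) *\<^sub>v vec_of_cart w = vec_of_cart (((*v) A ^^ k) w)"
proof (induction k arbitrary: w)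
  case 0
  then show ?case by (simp add: mat_of_cart_def)
next
  case (Suc k)
  have "(mat_of_cart A ^\<^sub>m k * mat_of_cart A) *\<^sub>v vec_of_cart w
      = (mat_of_cart A ^\<^sub>m k) *\<^sub>v (mat_of_cart A *\<^sub>v vec_of_cart w)"
    by (rule assoc_mult_mat_vec[of _ "CARD('n)" "CARD('n)" _ "CARD('n)"]) auto
  then show ?case by (simp add: Suc mat_of_cart_mult_vec funpow_swap1)
qed

lemma eigenvalue_mat_of_cart_iff:
  fixes A :: "'a::field^'n^'n::finite"
  shows "eigenvalue (mat_of_cart A) z \<longleftrightarrow> det (mat z - A) = 0"
proof -
  have "eigenvalue (mat_of_cart A) z \<longleftrightarrow>
      (\<exists>w::'a^'n. vec_of_cart w \<noteq> 0\<^sub>v CARD('n) \<and>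
        mat_of_cart A *\<^sub>v vec_of_cart w = z \<cdot>\<^sub>v vec_of_cart w)"
  proof -
    have dim: "dim_row (mat_of_cart A) = CARD('n)" by (simp add: mat_of_cart_def)
    have "v = vec_of_cart (cart_of_vec v :: 'a^'n)" if "v \<in> carrier_vec CARD('n)" for v
      using that by (simp add: vec_of_cart_inverse)
    then show ?thesis
      unfolding eigenvalue_def eigenvector_def dim
      by (metis vec_of_cart_carrier)
  qed
  also have "\<dots> \<longleftrightarrow> (\<exists>w. w \<noteq> 0 \<and> A *v w = z *s w)"
    by (simp flip: vec_of_cart_zero vec_of_cart_smult add: mat_of_cart_mult_vec)
  finally show ?thesis by (simp add: det_mat_minus_eq_0_iff)
qed

lemma spectrum_mat_of_cart:
  fixes A :: "'a::field^'n^'n::finite"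
  shows "spectrum (mat_of_cart A) = {z. det (mat z - A) = 0}"
  by (simp add: spectrum_def eigenvalue_mat_of_cart_iff set_eq_iff)

lemma norm_cart_of_vec_mult_le:
  fixes B :: "'a::real_normed_field Matrix.mat" and w :: "'a^'n::finite" and c :: real
  assumes B: "B \<in> carrier_mat CARD('n) CARD('n)" and c: "norm_bound B c"
  shows "norm (cart_of_vec (B *\<^sub>v vec_of_cart w) :: 'a^'n) \<le> real CARD('n)^2 * c * norm w"
proof -
  have "norm (vec_index (B *\<^sub>v vec_of_cart w) (cart_index i)) \<le> CARD('n) * c * norm w"
    for i :: 'n
  proof -
    have "vec_index (B *\<^sub>v vec_of_cart w) (cart_index i)
        = (\<Sum>k<CARD('n). B $$ (cart_index i, k) * w $ cart_enum k)"
      using B cart_index_less[of i]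
      by (simp add: vec_of_cart_def scalar_prod_def atLeast0LessThan)
    also have "norm \<dots> \<le> (\<Sum>k<CARD('n). c * norm w)"
    proof (intro sum_norm_le)
      fix k assume "k \<in> {..<CARD('n)}"
      then have "norm (B $$ (cart_index i, k)) \<le> c"
        using B c cart_index_less[of i] by (auto simp: norm_bound_def)
      moreover have "norm (w $ cart_enum k) \<le> norm w" by (rule Finite_Cartesian_Product.norm_nth_le)
      ultimately show "norm (B $$ (cart_index i, k) * w $ cart_enum k) \<le> c * norm w"
        by (simp add: norm_mult mult_mono')
    qed
    finally show ?thesis by simp
  qed
  then have "(\<Sum>i\<in>UNIV. norm ((cart_of_vec (B *\<^sub>v vec_of_cart w) :: 'a^'n) $ i))
      \<le> CARD('n) * (CARD('n) * c * norm w)"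
    by (intro sum_bounded_above) (simp add: cart_of_vec_def)
  moreover have "norm v \<le> (\<Sum>i\<in>UNIV. norm (v $ i))" for v :: "'a^'n"
    unfolding norm_vec_def by (rule L2_set_le_sum) simp
  ultimately have "norm (cart_of_vec (B *\<^sub>v vec_of_cart w) :: 'a^'n)
      \<le> CARD('n) * (CARD('n) * c * norm w)"
    by (rule order_trans[rotated])
  then show ?thesis by (simp add: power2_eq_square mult.assoc)
qed

lemma iterates_bounded_if_eigenvalues_in_unit_disc:
  fixes A :: "complex^'n^'n::finite"
  assumes "\<And>z. det (mat z - A) = 0 \<Longrightarrow> cmod z < 1"
  shows "\<exists>C. \<forall>k w. norm (((*v) A ^^ k) w) \<le> C * norm w"
proof -
  have "spectral_radius (mat_of_cart A) \<in> cmod ` spectrum (mat_of_cart A)"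
    by (rule spectral_radius_mem_max(1)[OF mat_of_cart_carrier]) simp
  then have "spectral_radius (mat_of_cart A) < 1"
    using assms by (auto simp: spectrum_mat_of_cart)
  then obtain c where c: "\<And>k. norm_bound (mat_of_cart A ^\<^sub>m k) c"
    using spectral_radius_jnf_norm_bound_less_1_upper_triangular[OF mat_of_cart_carrier] by blast
  have "norm (((*v) A ^^ k) w) \<le> real CARD('n)^2 * c * norm w" for k w
    using norm_cart_of_vec_mult_le[OF pow_carrier_mat[OF mat_of_cart_carrier] c, where w = w]
    by (simp add: mat_of_cart_pow_mult_vec)
  then show ?thesis by blast
qed

section \<open>Hurwitz matrices have contracting Euler iterates\<close>

(* For small t > 0 the map z |-> 1 + t z sends the finite set into the unit disc; a factor a
   slightly above 1 keeps it there. *)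
lemma affine_map_into_unit_disc:
  fixes Z :: "complex set"
  assumes "finite Z" and "\<And>z. z \<in> Z \<Longrightarrow> Re z < 0"
  shows "\<exists>a b. a > 1 \<and> b > 0 \<and> (\<forall>z\<in>Z. cmod (of_real a + of_real b * z) < 1)"
proof -
  have z_nz: "cmod z > 0" if "z \<in> Z" for z
    using assms(2)[OF that] by auto
  define t where "t = Min (insert 1 ((\<lambda>z. - Re z / (cmod z)\<^sup>2) ` Z))"
  have t_pos: "t > 0"
    unfolding t_def using assms z_nz by (subst Min_gr_iff) (auto simp: divide_neg_pos)
  have contract: "cmod (1 + of_real t * z) < 1" if z: "z \<in> Z" for z
  proof -
    have "t \<le> - Re z / (cmod z)\<^sup>2"
      unfolding t_def using assms(1) z by (intro Min_le) auto
    then have "t * (cmod z)\<^sup>2 \<le> - Re z"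
      using z_nz[OF z] by (simp add: field_simps)
    then have "t * (t * (cmod z)\<^sup>2) \<le> t * (- Re z)"
      using t_pos by (intro mult_left_mono) auto
    moreover have "(cmod (1 + of_real t * z))\<^sup>2 = 1 + 2 * t * Re z + t * (t * (cmod z)\<^sup>2)"
      unfolding cmod_power2 by (simp add: power2_eq_square algebra_simps)
    moreover have "t * Re z < 0" using t_pos assms(2)[OF z] by (rule mult_pos_neg)
    ultimately have "(cmod (1 + of_real t * z))\<^sup>2 < 1\<^sup>2" by simp
    then show ?thesis by (rule power2_less_imp_less) simp
  qed
  define s where "s = Max (insert 0 ((\<lambda>z. cmod (1 + of_real t * z)) ` Z))"
  have s: "0 \<le> s" "s < 1"
    unfolding s_def using assms(1) contract by (auto simp: Max_less_iff)
  define a where "a = 2 / (1 + s)"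
  have a: "a > 1" "a * s < 1"
    using s unfolding a_def by (auto simp: field_simps)
  have "cmod (of_real a + of_real (a * t) * z) < 1" if z: "z \<in> Z" for z
  proof -
    have "cmod (1 + of_real t * z) \<le> s"
      unfolding s_def using assms(1) z by (intro Max_ge) auto
    moreover have "of_real a + of_real (a * t) * z = of_real a * (1 + of_real t * z)"
      by (simp add: algebra_simps)
    ultimately have "cmod (of_real a + of_real (a * t) * z) \<le> a * s"
      using a by (simp add: norm_mult mult_left_mono)
    then show ?thesis using a by linarith
  qed
  moreover have "a * t > 0" using a t_pos by simp
  ultimately show ?thesis using a by blast
qed

definition cvec :: "real^'n \<Rightarrow> complex^'n" where
  "cvec y = (\<chi> i. complex_of_real (y $ i))"

definition cmat :: "real^'n^'m \<Rightarrow> complex^'n^'m" where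
  "cmat A = (\<chi> i j. complex_of_real (A $ i $ j))"

lemma norm_cvec [simp]: "norm (cvec y) = norm y"
  by (simp add: cvec_def norm_vec_def)

lemma cmat_mult_cvec: "cmat A *v cvec y = cvec (A *v y)"
  by (simp add: Finite_Cartesian_Product.vec_eq_iff cmat_def cvec_def matrix_vector_mult_def)

lemma cvec_funpow_matrix:
  fixes A :: "real^'n^'n"
  shows "cvec (((*v) A ^^ k) y) = ((*v) (cmat A) ^^ k) (cvec y)"
  by (induction k) (simp_all add: cmat_mult_cvec[symmetric])

lemma hurwitz_cmat_iff: "hurwitz M \<longleftrightarrow> (\<forall>z. det (mat z - cmat M) = 0 \<longrightarrow> Re z < 0)"
  by (simp add: hurwitz_def cmat_def)

lemma det_cmat_affine_eq_0:
  assumes "det (mat \<mu> - cmat (mat a + b *\<^sub>R M)) = 0" and "b \<noteq> 0"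
  shows "det (mat ((\<mu> - of_real a) / of_real b) - cmat M) = 0"
proof -
  have affine: "cmat (mat a + b *\<^sub>R M) *v w = of_real a *s w + of_real b *s (cmat M *v w)" for w
    unfolding cmat_def matrix_vector_mult_def
    by (simp add: Finite_Cartesian_Product.vec_eq_iff Finite_Cartesian_Product.mat_def
        distrib_right sum.distrib sum_distrib_left mult.assoc if_distrib[of complex_of_real]
        if_distrib[of "\<lambda>x. x * w $ _"] cong: if_cong)
  obtain w where w: "w \<noteq> 0" "cmat (mat a + b *\<^sub>R M) *v w = \<mu> *s w"
    using assms(1) by (auto simp: det_mat_minus_eq_0_iff)
  have "cmat M *v w = ((\<mu> - of_real a) / of_real b) *s w"
    using w(2) assms(2) unfolding affine
    by (simp add: Finite_Cartesian_Product.vec_eq_iff field_simps)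
  then show ?thesis
    using w(1) by (auto simp: det_mat_minus_eq_0_iff)
qed

lemma hurwitz_shifted_matrix_power_bounded:
  fixes M :: "real^'n^'n"
  assumes "hurwitz M"
  obtains a b C where "a > 1" "b > 0"
    "\<And>k y. norm (((*v) (mat a + b *\<^sub>R M) ^^ k) y) \<le> C * norm y"
proof -
  have "finite {z. det (mat z - cmat M) = 0}"
    using card_finite_spectrum(1)[OF mat_of_cart_carrier[of "cmat M"]]
    by (simp add: spectrum_mat_of_cart)
  moreover have "\<And>z. z \<in> {z. det (mat z - cmat M) = 0} \<Longrightarrow> Re z < 0"
    using assms by (simp add: hurwitz_cmat_iff)
  ultimately have "\<exists>a b. a > 1 \<and> b > 0 \<and>
      (\<forall>z\<in>{z. det (mat z - cmat M) = 0}. cmod (of_real a + of_real b * z) < 1)"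
    by (rule affine_map_into_unit_disc)
  then obtain a b where ab: "a > 1" "b > 0"
    and disc: "\<forall>z\<in>{z. det (mat z - cmat M) = 0}. cmod (of_real a + of_real b * z) < 1"
    by blast
  define P where "P = mat a + b *\<^sub>R M"
  have "cmod \<mu> < 1" if "det (mat \<mu> - cmat P) = 0" for \<mu>
  proof -
    have "det (mat ((\<mu> - of_real a) / of_real b) - cmat M) = 0"
      using det_cmat_affine_eq_0[of \<mu> a b M] that ab(2) unfolding P_def by simp
    then have "cmod (of_real a + of_real b * ((\<mu> - of_real a) / of_real b)) < 1"
      using disc by blast
    then show ?thesis using ab(2) by simp
  qed
  then obtain C where C: "\<And>k w. norm (((*v) (cmat P) ^^ k) w) \<le> C * norm w"
    using iterates_bounded_if_eigenvalues_in_unit_disc by blast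
  have "norm (((*v) P ^^ k) y) \<le> C * norm y" for k y
    using C[of k "cvec y"] by (simp flip: cvec_funpow_matrix)
  with ab show ?thesis unfolding P_def by (rule that)
qed

lemma hurwitz_Euler_iterates_contract:
  fixes M :: "real^'n^'n"
  assumes "hurwitz M"
  shows "\<exists>h>0. \<exists>N>0. \<forall>y. norm (((\<lambda>y. y + h *\<^sub>R (M *v y)) ^^ N) y) \<le> norm y / 2"
proof -
  obtain a b C where ab: "a > 1" "b > 0"
    and C: "\<And>k y. norm (((*v) (mat a + b *\<^sub>R M) ^^ k) y) \<le> C * norm y"
    using hurwitz_shifted_matrix_power_bounded[OF assms] by blast
  define f where "f y = y + (b / a) *\<^sub>R (M *v y)" for y
  have "f y = (1 / a) *\<^sub>R ((mat a + b *\<^sub>R M) *v y)" for y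
    using ab(1)
    by (simp add: f_def matrix_vector_mult_add_rdistrib mat_vector_mult
        scalar_mult_eq_scaleR scaleR_add_right flip: scaleR_matrix_vector_assoc)
  then have "(f ^^ k) y = (1 / a) ^ k *\<^sub>R (((*v) (mat a + b *\<^sub>R M) ^^ k) y)" for k y
    by (induction k) (simp_all add: matrix_vector_mult_scaleR)
  then have decay: "norm ((f ^^ k) y) \<le> (1 / a) ^ k * C * norm y" for k y
    using C[of k y] ab(1) by (simp add: mult.assoc mult_left_mono)
  have "(\<lambda>k. (1 / a) ^ k * C) \<longlonglongrightarrow> 0"
    using ab(1) by (intro tendsto_mult_left_zero LIMSEQ_power_zero) simp_all
  then have "\<forall>\<^sub>F k in sequentially. (1 / a) ^ k * C < 1 / 2"
    by (rule order_tendstoD) simp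
  then obtain N0 where N0: "\<And>k. k \<ge> N0 \<Longrightarrow> (1 / a) ^ k * C < 1 / 2"
    unfolding eventually_sequentially by blast
  define N where "N = Suc N0"
  have "norm ((f ^^ N) y) \<le> norm y / 2" for y
  proof -
    have "(1 / a) ^ N * C * norm y \<le> 1 / 2 * norm y"
      using N0[of N] by (intro mult_right_mono) (simp_all add: N_def)
    then show ?thesis using decay[of N y] by simp
  qed
  moreover have "b / a > 0" "N > 0" using ab by (simp_all add: N_def)
  ultimately show ?thesis unfolding f_def by blast
qed

section \<open>A quadratic Lyapunov form from contracting iterates\<close>

definition ode_exp_decay :: "('a::real_normed_vector \<Rightarrow> 'a) \<Rightarrow> real \<Rightarrow> real \<Rightarrow> bool" where
  "ode_exp_decay F c \<mu> \<longleftrightarrow>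
     (\<forall>x s t. s \<le> t \<longrightarrow> continuous_on {s..t} x \<longrightarrow>
        (\<forall>u\<in>{s<..<t}. (x has_vector_derivative F (x u)) (at u)) \<longrightarrow>
        norm (x t) \<le> c * exp (- \<mu> * (t - s)) * norm (x s))"

lemma ode_exp_decay_mono:
  assumes "ode_exp_decay F c \<mu>" and "0 \<le> c" "c \<le> c'" and "\<mu>' \<le> \<mu>"
  shows "ode_exp_decay F c' \<mu>'"
  unfolding ode_exp_decay_def
proof (intro allI impI)
  fix x :: "real \<Rightarrow> 'a" and s t :: real
  assume st: "s \<le> t" and x_cont: "continuous_on {s..t} x"
    and x_deriv: "\<forall>u\<in>{s<..<t}. (x has_vector_derivative F (x u)) (at u)"
  have "norm (x t) \<le> c * exp (- \<mu> * (t - s)) * norm (x s)"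
    using assms(1) st x_cont x_deriv unfolding ode_exp_decay_def by simp
  also have "\<dots> \<le> c' * exp (- \<mu>' * (t - s)) * norm (x s)"
    using assms(2-4) st by (intro mult_right_mono mult_mono) (auto intro: mult_right_mono)
  finally show "norm (x t) \<le> c' * exp (- \<mu>' * (t - s)) * norm (x s)" .
qed

lemma exp_decay_from_derivative_bound:
  fixes W W' :: "real \<Rightarrow> real"
  assumes "s \<le> t" and "continuous_on {s..t} W"
    and "\<And>u. s < u \<Longrightarrow> u < t \<Longrightarrow> (W has_real_derivative W' u) (at u)"
    and "\<And>u. s < u \<Longrightarrow> u < t \<Longrightarrow> W' u \<le> - \<mu> * W u"
  shows "W t \<le> exp (- \<mu> * (t - s)) * W s"
proof -
  have "exp (\<mu> * t) * W t \<le> exp (\<mu> * s) * W s"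
  proof (rule DERIV_nonpos_imp_decreasing_open[OF assms(1)])
    fix u assume u: "s < u" "u < t"
    have "((\<lambda>u. exp (\<mu> * u) * W u) has_real_derivative
        exp (\<mu> * u) * (\<mu> * W u + W' u)) (at u)"
      by (auto intro!: derivative_eq_intros assms(3) u simp: algebra_simps)
    moreover have "exp (\<mu> * u) * (\<mu> * W u + W' u) \<le> 0"
      using assms(4)[OF u] by (simp add: mult_nonneg_nonpos)
    ultimately show "\<exists>y. ((\<lambda>u. exp (\<mu> * u) * W u) has_real_derivative y) (at u) \<and> y \<le> 0"
      by blast
  qed (intro continuous_intros assms(2))
  then show ?thesis
    by (simp add: exp_diff algebra_simps mult_exp_exp pos_le_divide_eq flip: exp_add)
qed

definition iterate_form :: "('a::real_inner \<Rightarrow> 'a) \<Rightarrow> nat \<Rightarrow> 'a \<Rightarrow> 'a \<Rightarrow> real" where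
  "iterate_form f N y z = (\<Sum>k<N. inner ((f ^^ k) y) ((f ^^ k) z))"

lemma iterate_form_self: "iterate_form f N y y = (\<Sum>k<N. (norm ((f ^^ k) y))\<^sup>2)"
  by (simp add: iterate_form_def power2_norm_eq_inner)

lemma iterate_form_nonneg: "0 \<le> iterate_form f N y y"
  by (simp add: iterate_form_self sum_nonneg)

lemma iterate_form_shift:
  "iterate_form f N (f y) (f y) = iterate_form f N y y - (norm y)\<^sup>2 + (norm ((f ^^ N) y))\<^sup>2"
proof -
  define g where "g k = (norm ((f ^^ k) y))\<^sup>2" for k
  have "(\<Sum>k<Suc N. g k) = g 0 + (\<Sum>k<N. g (Suc k))"
    by (rule sum.lessThan_Suc_shift)
  moreover have "g (Suc k) = (norm ((f ^^ k) (f y)))\<^sup>2" for k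
    by (simp add: g_def funpow_Suc_right del: funpow.simps)
  ultimately show ?thesis by (simp add: iterate_form_self g_def)
qed

lemma norm_square_le_iterate_form:
  assumes "N > 0"
  shows "(norm y)\<^sup>2 \<le> iterate_form f N y y"
proof -
  have "(norm ((f ^^ 0) y))\<^sup>2 \<le> (\<Sum>k<N. (norm ((f ^^ k) y))\<^sup>2)"
    using assms by (intro member_le_sum) auto
  then show ?thesis by (simp add: iterate_form_self)
qed

lemma iterate_form_le_norm_square:
  assumes "bounded_linear f"
  shows "\<exists>L\<ge>1. \<forall>y. iterate_form f N y y \<le> L * (norm y)\<^sup>2"
proof -
  obtain K where K: "K \<ge> 0" "\<And>y. norm (f y) \<le> norm y * K"
    using bounded_linear.nonneg_bounded[OF assms] by blast
  have iter: "norm ((f ^^ k) y) \<le> K ^ k * norm y" for k y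
  proof (induction k)
    case (Suc k)
    have "norm ((f ^^ Suc k) y) \<le> norm ((f ^^ k) y) * K" by (simp add: K(2))
    also have "\<dots> \<le> K ^ k * norm y * K" using Suc K(1) by (rule mult_right_mono)
    finally show ?case by (simp add: algebra_simps)
  qed simp
  define L where "L = 1 + (\<Sum>k<N. (K ^ k)\<^sup>2)"
  have "iterate_form f N y y \<le> (\<Sum>k<N. (K ^ k * norm y)\<^sup>2)" for y
    unfolding iterate_form_self by (intro sum_mono power_mono iter) simp
  also have "\<dots> y \<le> L * (norm y)\<^sup>2" for y
    by (simp add: L_def power_mult_distrib sum_distrib_right distrib_right)
  finally have "\<forall>y. iterate_form f N y y \<le> L * (norm y)\<^sup>2" by blast
  moreover have "L \<ge> 1" unfolding L_def by (simp add: sum_nonneg)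
  ultimately show ?thesis by blast
qed

lemma linear_funpow:
  fixes f :: "'a::real_vector \<Rightarrow> 'a"
  shows "linear f \<Longrightarrow> linear (f ^^ k)"
proof (induction k)
  case (Suc k)
  then show ?case using linear_compose[of "f ^^ k" f] by (simp add: o_def)
qed (simp add: id_def linear_ident)

lemma iterate_form_scaleR_right:
  "linear f \<Longrightarrow> iterate_form f N y (c *\<^sub>R z) = c * iterate_form f N y z"
  by (simp add: iterate_form_def linear_scale[OF linear_funpow] sum_distrib_left)

lemma iterate_form_add_scaled:
  assumes "linear f"
  shows "iterate_form f N (y + c *\<^sub>R z) (y + c *\<^sub>R z)
    = iterate_form f N y y + 2 * c * iterate_form f N y z + c\<^sup>2 * iterate_form f N z z"
proof -
  note lin = linear_funpow[OF assms]
  have "inner ((f ^^ k) (y + c *\<^sub>R z)) ((f ^^ k) (y + c *\<^sub>R z))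
      = inner ((f ^^ k) y) ((f ^^ k) y) + 2 * c * inner ((f ^^ k) y) ((f ^^ k) z)
        + c\<^sup>2 * inner ((f ^^ k) z) ((f ^^ k) z)" for k
    using inner_commute[of "(f ^^ k) y" "(f ^^ k) z"]
    by (simp add: linear_add[OF lin] linear_scale[OF lin] inner_add_left inner_add_right
        power2_eq_square distrib_left)
  then show ?thesis
    unfolding iterate_form_def by (simp add: sum.distrib sum_distrib_left)
qed

lemma bounded_linear_funpow:
  fixes f :: "'a::real_normed_vector \<Rightarrow> 'a"
  shows "bounded_linear f \<Longrightarrow> bounded_linear (f ^^ k)"
proof (induction k)
  case (Suc k)
  then show ?case using bounded_linear_compose[of f "f ^^ k"] by (simp add: o_def)
qed (simp add: id_def bounded_linear_ident)

lemma has_real_derivative_inner_self: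
  assumes "(y has_vector_derivative D) (at u)"
  shows "((\<lambda>u. inner (y u) (y u)) has_real_derivative 2 * inner (y u) D) (at u)"
proof -
  have y: "(y has_derivative (\<lambda>r. r *\<^sub>R D)) (at u)"
    using assms by (simp add: has_vector_derivative_def)
  have "((\<lambda>u. inner (y u) (y u)) has_derivative
      (\<lambda>r. inner (y u) (r *\<^sub>R D) + inner (r *\<^sub>R D) (y u))) (at u)"
    by (rule has_derivative_inner[OF y y])
  moreover have "(\<lambda>r. inner (y u) (r *\<^sub>R D) + inner (r *\<^sub>R D) (y u)) = (*) (2 * inner (y u) D)"
    by (auto simp: fun_eq_iff inner_commute algebra_simps)
  ultimately show ?thesis by (simp add: has_field_derivative_def)
qed

lemma has_real_derivative_iterate_form:
  assumes "bounded_linear f" and "(x has_vector_derivative D) (at u)"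
  shows "((\<lambda>u. iterate_form f N (x u) (x u)) has_real_derivative 2 * iterate_form f N (x u) D) (at u)"
proof -
  have "((\<lambda>u. inner ((f ^^ k) (x u)) ((f ^^ k) (x u))) has_real_derivative
      2 * inner ((f ^^ k) (x u)) ((f ^^ k) D)) (at u)" for k
    using bounded_linear.has_vector_derivative[OF bounded_linear_funpow[OF assms(1)] assms(2)]
    by (rule has_real_derivative_inner_self)
  then show ?thesis
    unfolding iterate_form_def sum_distrib_left by (intro DERIV_sum) auto
qed

lemma continuous_on_iterate_form:
  assumes "bounded_linear f" and "continuous_on S x"
  shows "continuous_on S (\<lambda>u. iterate_form f N (x u) (x u))"
  unfolding iterate_form_def
  by (intro continuous_intros bounded_linear.continuous_on[OF bounded_linear_funpow[OF assms(1)]]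
      assms(2))

(* Expand V (y + h A y) and compare with V (F y) = V y - |y|^2 + |F^N y|^2 <= V y - 3/4 |y|^2. *)
lemma iterate_form_Euler_dissipation:
  assumes A: "bounded_linear A" and h: "h > 0"
    and contract: "\<And>y. norm (((\<lambda>y. y + h *\<^sub>R A y) ^^ N) y) \<le> norm y / 2"
  shows "iterate_form (\<lambda>y. y + h *\<^sub>R A y) N y (A y) \<le> - 3 / (8 * h) * (norm y)\<^sup>2"
proof -
  define f where "f y = y + h *\<^sub>R A y" for y
  have "linear f"
    unfolding f_def by (intro bounded_linear.linear bounded_linear_add bounded_linear_ident
        bounded_linear_compose[OF bounded_linear_scaleR_right A])
  then have "iterate_form f N (f y) (f y)
      = iterate_form f N y y + 2 * h * iterate_form f N y (A y) + h\<^sup>2 * iterate_form f N (A y) (A y)"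
    unfolding f_def by (rule iterate_form_add_scaled)
  moreover have "(norm ((f ^^ N) y))\<^sup>2 \<le> (norm y / 2)\<^sup>2"
    using contract[of y] unfolding f_def by (intro power_mono) auto
  moreover have "0 \<le> h\<^sup>2 * iterate_form f N (A y) (A y)"
    by (simp add: iterate_form_nonneg)
  ultimately have "2 * h * iterate_form f N y (A y) \<le> - 3 / 4 * (norm y)\<^sup>2"
    using iterate_form_shift[of f N y] by (simp add: power_divide)
  then show ?thesis
    using h unfolding f_def[abs_def] by (simp add: field_simps)
qed

lemma iterate_form_decays_along_solution:
  fixes A f :: "'a::real_inner \<Rightarrow> 'a"
  assumes f: "bounded_linear f"
    and dissipation: "\<And>y. iterate_form f N y (A y) \<le> - \<beta> * iterate_form f N y y"
    and g: "g \<ge> 0" and st: "s \<le> t" and x_cont: "continuous_on {s..t} x"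
    and x_deriv: "\<forall>u\<in>{s<..<t}. (x has_vector_derivative g *\<^sub>R A (x u)) (at u)"
  shows "iterate_form f N (x t) (x t) \<le> exp (- (2 * g * \<beta>) * (t - s)) * iterate_form f N (x s) (x s)"
proof (rule exp_decay_from_derivative_bound[OF st continuous_on_iterate_form[OF f x_cont]])
  fix u assume "s < u" "u < t"
  then show "((\<lambda>u. iterate_form f N (x u) (x u)) has_real_derivative
      2 * iterate_form f N (x u) (g *\<^sub>R A (x u))) (at u)"
    using x_deriv by (intro has_real_derivative_iterate_form[OF f]) auto
  have "2 * iterate_form f N (x u) (g *\<^sub>R A (x u)) = 2 * g * iterate_form f N (x u) (A (x u))"
    by (simp add: iterate_form_scaleR_right[OF bounded_linear.linear[OF f]])
  also have "\<dots> \<le> 2 * g * (- \<beta> * iterate_form f N (x u) (x u))"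
    using dissipation g by (intro mult_left_mono) auto
  also have "\<dots> = - (2 * g * \<beta>) * iterate_form f N (x u) (x u)"
    by (simp add: algebra_simps)
  finally show "2 * iterate_form f N (x u) (g *\<^sub>R A (x u))
      \<le> - (2 * g * \<beta>) * iterate_form f N (x u) (x u)" .
qed

lemma iterate_form_Lyapunov_exp_decay:
  fixes A f :: "'a::real_inner \<Rightarrow> 'a"
  assumes f: "bounded_linear f" and N: "N > 0"
    and L: "L \<ge> 1" "\<And>y. iterate_form f N y y \<le> L * (norm y)\<^sup>2"
    and dissipation: "\<And>y. iterate_form f N y (A y) \<le> - \<beta> * iterate_form f N y y"
    and g: "g \<ge> 0"
  shows "ode_exp_decay (\<lambda>y. g *\<^sub>R A y) (sqrt L) (g * \<beta>)"
  unfolding ode_exp_decay_def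
proof (intro allI impI)
  fix x :: "real \<Rightarrow> 'a" and s t :: real
  assume st: "s \<le> t" and x_cont: "continuous_on {s..t} x"
    and x_deriv: "\<forall>u\<in>{s<..<t}. (x has_vector_derivative g *\<^sub>R A (x u)) (at u)"
  have "(norm (x t))\<^sup>2 \<le> iterate_form f N (x t) (x t)"
    using N by (rule norm_square_le_iterate_form)
  also have "\<dots> \<le> exp (- (2 * g * \<beta>) * (t - s)) * iterate_form f N (x s) (x s)"
    using f dissipation g st x_cont x_deriv by (rule iterate_form_decays_along_solution)
  also have "\<dots> \<le> exp (- (2 * g * \<beta>) * (t - s)) * (L * (norm (x s))\<^sup>2)"
    using L(2) by (rule mult_left_mono) simp
  also have "\<dots> = (sqrt L * exp (- (g * \<beta>) * (t - s)) * norm (x s))\<^sup>2"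
  proof -
    have "exp (- (2 * g * \<beta>) * (t - s)) = (exp (- (g * \<beta>) * (t - s)))\<^sup>2"
      by (subst exp_double[symmetric]) (simp add: algebra_simps)
    then show ?thesis using L(1) by (simp add: power_mult_distrib)
  qed
  finally show "norm (x t) \<le> sqrt L * exp (- (g * \<beta>) * (t - s)) * norm (x s)"
    by (rule power2_le_imp_le) (use L(1) in simp)
qed

lemma Euler_contraction_exp_decay:
  fixes A :: "'a::real_inner \<Rightarrow> 'a"
  assumes A: "bounded_linear A" and h: "h > 0" and N: "N > 0"
    and contract: "\<And>y. norm (((\<lambda>y. y + h *\<^sub>R A y) ^^ N) y) \<le> norm y / 2"
  shows "\<exists>c\<ge>1. \<exists>\<beta>>0. \<forall>g\<ge>0. ode_exp_decay (\<lambda>y. g *\<^sub>R A y) c (g * \<beta>)"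
proof -
  define f where "f y = y + h *\<^sub>R A y" for y
  have f: "bounded_linear f"
    unfolding f_def
    by (intro bounded_linear_add bounded_linear_ident
        bounded_linear_compose[OF bounded_linear_scaleR_right A])
  obtain L where L: "L \<ge> 1" "\<And>y. iterate_form f N y y \<le> L * (norm y)\<^sup>2"
    using iterate_form_le_norm_square[OF f] by blast
  define \<beta> where "\<beta> = 3 / (8 * h * L)"
  have \<beta>: "\<beta> > 0" using h L(1) by (simp add: \<beta>_def)
  have dissipation: "iterate_form f N y (A y) \<le> - \<beta> * iterate_form f N y y" for y
  proof -
    have "iterate_form f N y (A y) \<le> - 3 / (8 * h) * (norm y)\<^sup>2"
      unfolding f_def[abs_def] by (rule iterate_form_Euler_dissipation[OF A h contract])
    also have "\<dots> = - \<beta> * (L * (norm y)\<^sup>2)"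
      using L(1) by (simp add: \<beta>_def)
    also have "\<dots> \<le> - \<beta> * iterate_form f N y y"
      using L(2)[of y] \<beta> by (simp add: mult_left_mono)
    finally show ?thesis .
  qed
  have "ode_exp_decay (\<lambda>y. g *\<^sub>R A y) (sqrt L) (g * \<beta>)" if "g \<ge> 0" for g
    by (rule iterate_form_Lyapunov_exp_decay[OF f N L dissipation that])
  moreover have "sqrt L \<ge> 1" using L(1) by simp
  ultimately show ?thesis using \<beta> by blast
qed

lemma hurwitz_exp_decay:
  fixes M :: "real^'n^'n"
  assumes "hurwitz M"
  shows "\<exists>c\<ge>1. \<exists>\<beta>>0. \<forall>g\<ge>0. ode_exp_decay (\<lambda>y. g *\<^sub>R (M *v y)) c (g * \<beta>)"
proof -
  obtain h N where "h > 0" "N > 0"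
    and "\<And>y. norm (((\<lambda>y. y + h *\<^sub>R (M *v y)) ^^ N) y) \<le> norm y / 2"
    using hurwitz_Euler_iterates_contract[OF assms] by blast
  then show ?thesis
    by (rule Euler_contraction_exp_decay[OF matrix_vector_mul_bounded_linear])
qed

lemma hurwitz_family_uniform_exp_decay:
  fixes M :: "nat \<Rightarrow> real^'n^'n"
  assumes "finite I" and "\<forall>i\<in>I. hurwitz (M i)"
  shows "\<exists>c\<ge>1. \<exists>\<beta>>0. \<forall>i\<in>I. \<forall>g\<ge>0. ode_exp_decay (\<lambda>y. g *\<^sub>R (M i *v y)) c (g * \<beta>)"
  using assms
proof (induction I rule: finite_induct)
  case empty
  show ?case by (auto intro!: exI[of _ 1])
next
  case (insert i I)
  obtain c \<beta> where c: "c \<ge> 1" "\<beta> > 0"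
    and I: "\<forall>j\<in>I. \<forall>g\<ge>0. ode_exp_decay (\<lambda>y. g *\<^sub>R (M j *v y)) c (g * \<beta>)"
    using insert by auto
  obtain c' \<beta>' where c': "c' \<ge> 1" "\<beta>' > 0"
    and i: "\<forall>g\<ge>0. ode_exp_decay (\<lambda>y. g *\<^sub>R (M i *v y)) c' (g * \<beta>')"
    using hurwitz_exp_decay insert.prems by blast
  have "ode_exp_decay (\<lambda>y. g *\<^sub>R (M j *v y)) (max c c') (g * min \<beta> \<beta>')"
    if j: "j \<in> insert i I" and g: "g \<ge> 0" for j g
  proof -
    have rates: "g * min \<beta> \<beta>' \<le> g * \<beta>" "g * min \<beta> \<beta>' \<le> g * \<beta>'"
      using g by (simp_all add: mult_left_mono)
    consider "j = i" | "j \<in> I" using j by blast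
    then show ?thesis
    proof cases
      case 1
      show ?thesis unfolding 1
        by (rule ode_exp_decay_mono[where c = c' and \<mu> = "g * \<beta>'"]) (use i g c' rates in simp_all)
    next
      case 2
      show ?thesis
        by (rule ode_exp_decay_mono[where c = c and \<mu> = "g * \<beta>"]) (use I g c rates 2 in simp_all)
    qed
  qed
  moreover have "max c c' \<ge> 1" "min \<beta> \<beta>' > 0" using c c' by auto
  ultimately show ?case by blast
qed

section \<open>Switching with dwell time\<close>

lemma dwell_signalD:
  assumes "dwell_signal p \<tau> \<sigma>"
  shows dwell_signal_range: "0 \<le> t \<Longrightarrow> \<sigma> t \<in> {1..p}"
    and dwell_signal_continuous_right: "0 \<le> t \<Longrightarrow> continuous (at_right t) \<sigma>"
    and dwell_signal_finite_switches: "finite (switch_times \<sigma> \<inter> {0..T})"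
    and dwell_signal_dwell_time: "s \<in> insert 0 (switch_times \<sigma>) \<Longrightarrow>
      t \<in> insert 0 (switch_times \<sigma>) \<Longrightarrow> s \<noteq> t \<Longrightarrow> \<tau> \<le> \<bar>s - t\<bar>"
  using assms unfolding dwell_signal_def by auto

lemma dwell_signal_previous_switch:
  assumes "dwell_signal p \<tau> \<sigma>" and "0 < T"
  obtains s where "s \<in> insert 0 (switch_times \<sigma>)" "0 \<le> s" "s < T"
    "\<And>v. s < v \<Longrightarrow> v < T \<Longrightarrow> v \<notin> switch_times \<sigma>"
proof -
  define S where "S = insert 0 (switch_times \<sigma>) \<inter> {0..<T}"
  have "finite (switch_times \<sigma> \<inter> {0..T})"
    by (rule dwell_signal_finite_switches[OF assms(1)])
  moreover have "S \<subseteq> insert 0 (switch_times \<sigma> \<inter> {0..T})"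
    by (auto simp: S_def)
  ultimately have "finite S"
    using finite_subset by blast
  moreover have "0 \<in> S" using assms(2) by (simp add: S_def)
  ultimately have max: "Max S \<in> S" "\<And>v. v \<in> S \<Longrightarrow> v \<le> Max S"
    using Max_in by auto
  have S: "S \<subseteq> insert 0 (switch_times \<sigma>)" "S \<subseteq> {0..<T}" by (auto simp: S_def)
  show ?thesis
  proof (rule that)
    show "Max S \<in> insert 0 (switch_times \<sigma>)" "0 \<le> Max S" "Max S < T"
      using max(1) S by auto
    show "v \<notin> switch_times \<sigma>" if "Max S < v" "v < T" for v
    proof
      assume "v \<in> switch_times \<sigma>"
      with that \<open>0 \<le> Max S\<close> have "v \<in> S" by (simp add: S_def)
      with max(2) that(1) show False by fastforce
    qed
  qed
qed

lemma dwell_signal_constant_between_switches: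
  assumes dw: "dwell_signal p \<tau> \<sigma>" and s: "0 \<le> s" "s \<le> u" "u < t"
    and no_switch: "\<And>v. s < v \<Longrightarrow> v < t \<Longrightarrow> v \<notin> switch_times \<sigma>"
  shows "\<sigma> u = \<sigma> s"
proof (cases "u = s")
  case False
  define I where "I = {s<..<t}"
  have "continuous (at v within I) \<sigma>" if "v \<in> I" for v
  proof -
    have "continuous (at v within {0..}) \<sigma>"
      using that s no_switch unfolding I_def switch_times_def by auto
    then show ?thesis
      by (rule continuous_within_subset) (use s in \<open>auto simp: I_def\<close>)
  qed
  then have "continuous_on I (\<lambda>v. real (\<sigma> v))"
    by (intro continuous_on_of_nat) (simp add: continuous_on_eq_continuous_within)
  moreover have "(\<lambda>v. real (\<sigma> v)) ` I \<subseteq> real ` {1..p}"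
    using dwell_signal_range[OF dw] s by (force simp: I_def)
  then have "finite ((\<lambda>v. real (\<sigma> v)) ` I)"
    by (rule finite_subset) simp
  ultimately have "(\<lambda>v. real (\<sigma> v)) constant_on I"
    by (intro continuous_finite_range_constant) (simp_all add: I_def)
  then obtain k where k: "\<And>v. v \<in> I \<Longrightarrow> \<sigma> v = k"
    unfolding constant_on_def by (metis of_nat_eq_iff)
  have "continuous (at_right s) \<sigma>"
    using dwell_signal_continuous_right[OF dw] s by simp
  then have "\<forall>\<^sub>F v in at_right s. \<sigma> v = \<sigma> s"
    by (simp add: continuous_within tendsto_discrete)
  then obtain b where b: "b > s" "\<And>v. s < v \<Longrightarrow> v < b \<Longrightarrow> \<sigma> v = \<sigma> s"
    unfolding eventually_at_right_field by blast
  define v where "v = (s + min b t) / 2"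
  have "\<sigma> v = \<sigma> s" "v \<in> I"
    using b s by (auto simp: v_def I_def)
  then show ?thesis
    using k[of u] k[of v] False s by (auto simp: I_def)
qed simp

lemma ode_exp_decay_between_switches:
  fixes x :: "real \<Rightarrow> 'a::real_normed_vector"
  assumes dw: "dwell_signal p \<tau> \<sigma>" and x_cont: "continuous_on {0..} x"
    and x_deriv: "\<forall>t\<ge>0. t \<notin> switch_times \<sigma> \<longrightarrow>
        (x has_vector_derivative F (\<sigma> t) (x t)) (at t within {0..})"
    and modes: "\<forall>i\<in>{1..p}. ode_exp_decay (F i) c \<mu>"
    and s: "0 \<le> s" "s \<le> t"
    and no_switch: "\<And>v. s < v \<Longrightarrow> v < t \<Longrightarrow> v \<notin> switch_times \<sigma>"
  shows "norm (x t) \<le> c * exp (- \<mu> * (t - s)) * norm (x s)"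
proof -
  have "\<sigma> s \<in> {1..p}" using dwell_signal_range[OF dw] s by simp
  then have mode: "ode_exp_decay (F (\<sigma> s)) c \<mu>" using modes by blast
  have deriv: "(x has_vector_derivative F (\<sigma> s) (x u)) (at u)" if u: "u \<in> {s<..<t}" for u
  proof -
    have "0 \<le> u" "u \<notin> switch_times \<sigma>" using no_switch u s by auto
    then have "(x has_vector_derivative F (\<sigma> u) (x u)) (at u within {0..})"
      using x_deriv by blast
    moreover have "at u within {0..} = at u"
      by (rule at_within_interior) (use u s in simp)
    moreover have "\<sigma> u = \<sigma> s"
      using u by (intro dwell_signal_constant_between_switches[OF dw s(1) _ _ no_switch]) simp_all
    ultimately show ?thesis by simp
  qed
  have "continuous_on {s..t} x"
    using x_cont by (rule continuous_on_subset) (use s in auto)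
  then show ?thesis
    using mode[unfolded ode_exp_decay_def, rule_format, OF s(2)] deriv by blast
qed

lemma dwell_time_gain_le:
  fixes c \<tau> lam \<mu> l :: real
  assumes "c \<ge> 1" and "\<tau> > 0" and "lam + ln c / \<tau> \<le> \<mu>" and "\<tau> \<le> l"
  shows "c * exp (- \<mu> * l) \<le> exp (- lam * l)"
proof -
  have "1 \<le> l / \<tau>" using assms(2,4) by (simp add: le_divide_eq)
  then have "ln c * 1 \<le> ln c * (l / \<tau>)"
    using assms(1) by (intro mult_left_mono) auto
  then have "ln c \<le> ln c / \<tau> * l" by simp
  also have "\<dots> \<le> (\<mu> - lam) * l"
    using assms by (intro mult_right_mono) auto
  finally have exponent: "ln c + - \<mu> * l \<le> - lam * l" by (simp add: algebra_simps)
  have "c * exp (- \<mu> * l) = exp (ln c + - \<mu> * l)"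
    using assms(1) by (simp only: exp_add exp_ln_iff) simp
  also have "\<dots> \<le> exp (- lam * l)"
    using exponent by simp
  finally show ?thesis .
qed

(* Consecutive switching times are at least tau apart, so ceiling (r / tau) drops from one
   switching time to the previous one. *)
lemma dwell_time_decay_at_switches:
  fixes x :: "real \<Rightarrow> 'a::real_normed_vector"
  assumes dw: "dwell_signal p \<tau> \<sigma>" and x_cont: "continuous_on {0..} x"
    and x_deriv: "\<forall>t\<ge>0. t \<notin> switch_times \<sigma> \<longrightarrow>
        (x has_vector_derivative F (\<sigma> t) (x t)) (at t within {0..})"
    and modes: "\<forall>i\<in>{1..p}. ode_exp_decay (F i) c \<mu>"
    and c: "c \<ge> 1" and \<tau>: "\<tau> > 0" and rate: "lam + ln c / \<tau> \<le> \<mu>"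
    and r: "r \<in> insert 0 (switch_times \<sigma>)"
  shows "norm (x r) \<le> exp (- lam * r) * norm (x 0)"
  using r
proof (induction "nat \<lceil>r / \<tau>\<rceil>" arbitrary: r rule: less_induct)
  case less
  show ?case
  proof (cases "r = 0")
    case False
    then have "0 < r" using less.prems by (auto simp: switch_times_def)
    then obtain s where s: "s \<in> insert 0 (switch_times \<sigma>)" "0 \<le> s" "s < r"
      and no_switch: "\<And>v. s < v \<Longrightarrow> v < r \<Longrightarrow> v \<notin> switch_times \<sigma>"
      using dwell_signal_previous_switch[OF dw] by blast
    have "\<tau> \<le> \<bar>s - r\<bar>"
      using dwell_signal_dwell_time[OF dw, where s = s and t = r] s(1,3) less.prems by simp
    then have gap: "\<tau> \<le> r - s" using s(3) by simp
    then have "s / \<tau> \<le> r / \<tau> - 1" using \<tau> by (simp add: field_simps)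
    then have "\<lceil>s / \<tau>\<rceil> \<le> \<lceil>r / \<tau>\<rceil> - 1" by (metis ceiling_diff_one ceiling_mono)
    moreover have "0 < \<lceil>r / \<tau>\<rceil>" using \<open>0 < r\<close> \<tau> by simp
    ultimately have "nat \<lceil>s / \<tau>\<rceil> < nat \<lceil>r / \<tau>\<rceil>" by linarith
    then have IH: "norm (x s) \<le> exp (- lam * s) * norm (x 0)"
      using less.hyps s(1) by blast
    have "norm (x r) \<le> c * exp (- \<mu> * (r - s)) * norm (x s)"
      using ode_exp_decay_between_switches[OF dw x_cont x_deriv modes s(2) less_imp_le[OF s(3)]
          no_switch] .
    also have "\<dots> \<le> exp (- lam * (r - s)) * norm (x s)"
      by (intro mult_right_mono dwell_time_gain_le[OF c \<tau> rate gap]) simp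
    also have "\<dots> \<le> exp (- lam * (r - s)) * (exp (- lam * s) * norm (x 0))"
      using IH by (rule mult_left_mono) simp
    also have "\<dots> = exp (- lam * r) * norm (x 0)"
      by (simp add: mult.assoc flip: exp_add) (simp add: algebra_simps)
    finally show ?thesis .
  qed simp
qed

lemma dwell_time_switching_decay:
  fixes x :: "real \<Rightarrow> 'a::real_normed_vector"
  assumes dw: "dwell_signal p \<tau> \<sigma>" and x_cont: "continuous_on {0..} x"
    and x_deriv: "\<forall>t\<ge>0. t \<notin> switch_times \<sigma> \<longrightarrow>
        (x has_vector_derivative F (\<sigma> t) (x t)) (at t within {0..})"
    and modes: "\<forall>i\<in>{1..p}. ode_exp_decay (F i) c \<mu>"
    and c: "c \<ge> 1" and \<tau>: "\<tau> > 0" and rate: "lam + ln c / \<tau> \<le> \<mu>"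
    and t: "0 \<le> t"
  shows "norm (x t) \<le> c * exp (- lam * t) * norm (x 0)"
proof (cases "t = 0")
  case False
  then have "0 < t" using t by simp
  then obtain s where s: "s \<in> insert 0 (switch_times \<sigma>)" "0 \<le> s" "s < t"
    and no_switch: "\<And>v. s < v \<Longrightarrow> v < t \<Longrightarrow> v \<notin> switch_times \<sigma>"
    using dwell_signal_previous_switch[OF dw] by blast
  have "0 \<le> ln c / \<tau>" using c \<tau> by simp
  then have "lam \<le> \<mu>" using rate by linarith
  have "norm (x t) \<le> c * exp (- \<mu> * (t - s)) * norm (x s)"
    using ode_exp_decay_between_switches[OF dw x_cont x_deriv modes s(2) less_imp_le[OF s(3)]
        no_switch] .
  also have "\<dots> \<le> c * exp (- lam * (t - s)) * norm (x s)"
    using \<open>lam \<le> \<mu>\<close> s(3) c by (intro mult_right_mono mult_left_mono) (auto intro: mult_right_mono)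
  also have "\<dots> \<le> c * exp (- lam * (t - s)) * (exp (- lam * s) * norm (x 0))"
    using dwell_time_decay_at_switches[OF dw x_cont x_deriv modes c \<tau> rate s(1)] c
    by (intro mult_left_mono) simp_all
  also have "\<dots> = c * exp (- lam * t) * norm (x 0)"
    by (simp add: mult.assoc flip: exp_add) (simp add: algebra_simps)
  finally show ?thesis .
qed (use mult_right_mono[OF c norm_ge_zero] in simp)

theorem lemma1:
  fixes M :: "nat \<Rightarrow> real^'n^'n" and p :: nat and tauD lam :: real
  assumes "\<forall>i\<in>{1..p}. hurwitz (M i)" and "tauD > 0" and "lam > 0"
  shows "\<exists>g0>0. \<forall>g\<ge>g0. \<exists>c>0. \<forall>\<sigma> (x :: real \<Rightarrow> real^'n).
           dwell_signal p tauD \<sigma> \<and> continuous_on {0..} x \<and>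
           (\<forall>t\<ge>0. t \<notin> switch_times \<sigma> \<longrightarrow>
              (x has_vector_derivative (g *\<^sub>R (M (\<sigma> t) *v x t))) (at t within {0..}))
           \<longrightarrow> (\<forall>t\<ge>0. norm (x t) \<le> c * exp (- lam * t) * norm (x 0))"
proof -
  obtain c \<beta> where c: "c \<ge> 1" and \<beta>: "\<beta> > 0"
    and modes: "\<forall>i\<in>{1..p}. \<forall>g\<ge>0. ode_exp_decay (\<lambda>y. g *\<^sub>R (M i *v y)) c (g * \<beta>)"
    using hurwitz_family_uniform_exp_decay[OF finite_atLeastAtMost assms(1)] by blast
  define g0 where "g0 = (lam + ln c / tauD) / \<beta> + 1"
  have g0: "g0 > 0"
    using assms(2,3) c \<beta> unfolding g0_def by (intro add_nonneg_pos divide_nonneg_pos) auto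
  have rate: "lam + ln c / tauD \<le> g * \<beta>" if "g \<ge> g0" for g
  proof -
    have "lam + ln c / tauD \<le> g0 * \<beta>" using \<beta> by (simp add: g0_def field_simps)
    also have "\<dots> \<le> g * \<beta>" using that \<beta> by (simp add: mult_right_mono)
    finally show ?thesis .
  qed
  have "norm (x t) \<le> c * exp (- lam * t) * norm (x 0)"
    if "g \<ge> g0" and "dwell_signal p tauD \<sigma>" and "continuous_on {0..} x"
      and "\<forall>t\<ge>0. t \<notin> switch_times \<sigma> \<longrightarrow>
        (x has_vector_derivative g *\<^sub>R (M (\<sigma> t) *v x t)) (at t within {0..})"
      and "0 \<le> t"
    for g \<sigma> and x :: "real \<Rightarrow> real^'n" and t
    using that modes g0
    by (intro dwell_time_switching_decay[where F = "\<lambda>i y. g *\<^sub>R (M i *v y)", OF _ _ _ _ c assms(2)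
        rate]) auto
  then show ?thesis
    using g0 c by (intro exI[of _ g0]) (auto intro!: exI[of _ c])
qed

end
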